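(* Let $q$ be a prime power, $\varepsilon=\pm1$, and let $T$ be a maximal torus of $\operatorname{SL}_n(\varepsilon q)$ parameterized by the partition $n=n_1+\ldots+n_s$. Let $t=(n_1,\ldots,n_s)$ and $n_i=tn_i'$ for $i=1,\ldots,s$. If $(n_i',n_j',n_k')=1$ for some pairwise distinct $i,j,k$, then $$T\cong\mathbb{Z}_{((\varepsilon q)^t-1)/(\varepsilon q-1)}\times\mathbb{Z}_{[(\varepsilon q)^{n_i}-1,\,(\varepsilon q)^{(n_j,n_k)}-1]}\times\mathbb{Z}_{[(\varepsilon q)^{n_j}-1,\,(\varepsilon q)^{n_k}-1]}\times\prod_{l\ne i,j,k}\mathbb{Z}_{(\varepsilon q)^{n_l}-1}.$$
   Context: For a nonzero integer $m$, $\mathbb{Z}_m$ denotes a cyclic group of order $|m|$; gcd $(\cdot,\ldots,\cdot)$ and lcm $[\cdot,\ldots,\cdot]$ are taken positive. Convention: $\operatorname{SL}_n(-q)=\operatorname{SU}_n(q)$. The conjugacy classes of maximal tori of $\operatorname{SL}_n(\varepsilon q)$ are parameterized by unordered partitions of $n$; the torus parameterized by $n=n_1+\ldots+n_s$ is the intersection with $\operatorname{SL}_n(\varepsilon q)$ of a maximal torus of $\operatorname{GL}_n(\varepsilon q)$ (resp. $\operatorname{GU}_n(q)$) isomorphic to $\prod_i\mathbb{Z}_{(\varepsilon q)^{n_i}-1}$, corresponding to Weyl group elements of cycle type $(n_1,\ldots,n_s)$. *)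

theory Defs
  imports "HOL-Computational_Algebra.Primes" "HOL-Algebra.Elementary_Groups" "HOL-Algebra.Product_Groups"
begin

definition cyc :: "int \<Rightarrow> int monoid" where
  "cyc m = integer_mod_group (nat \<bar>m\<bar>)"

definition cyc_prod :: "int list \<Rightarrow> (nat \<Rightarrow> int) monoid" where
  "cyc_prod ms = product_group {..<length ms} (\<lambda>l. cyc (ms ! l))"

text \<open>Maximal torus of GL_n(eps q) (resp. GU_n(q)) parameterized by the partition ns:
  the product of cyclic groups of orders (eps q)^(n_i) - 1.\<close>
definition GL_torus :: "int \<Rightarrow> nat \<Rightarrow> nat list \<Rightarrow> (nat \<Rightarrow> int) monoid" where
  "GL_torus eps q ns = cyc_prod (map (\<lambda>ni. (eps * int q) ^ ni - 1) ns)"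

text \<open>The determinant on this torus: on each factor it is the (surjective) norm map
  Z_((eps q)^(n_i) - 1) -> Z_(eps q - 1) (in additive coordinates: reduction modulo
  |eps q - 1|, after choosing compatible generators), and the determinant is the
  product (here: sum) of these norms.\<close>
definition torus_det :: "int \<Rightarrow> nat \<Rightarrow> nat list \<Rightarrow> (nat \<Rightarrow> int) \<Rightarrow> int" where
  "torus_det eps q ns a = (\<Sum>l<length ns. a l) mod \<bar>eps * int q - 1\<bar>"

definition SL_torus :: "int \<Rightarrow> nat \<Rightarrow> nat list \<Rightarrow> (nat \<Rightarrow> int) monoid" where
  "SL_torus eps q ns = (GL_torus eps q ns)
     \<lparr>carrier := kernel (GL_torus eps q ns) (cyc (eps * int q - 1)) (torus_det eps q ns)\<rparr>"

end

theory Submission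
  imports Defs
begin

text \<open>
  Write x = \<epsilon>q and m_l = x^n_l - 1. The torus is the kernel of a \<mapsto> (\<Sum>a_l) mod (x - 1)
  on the product of the cyclic groups Z_m_l. Since gcd (x^a - 1) (x^b - 1) = \<plusminus>(x^(gcd a b) - 1),
  the hypothesis makes gcd (m_i, m_j, m_k) = \<plusminus>(x^t - 1), which divides every m_l.
  Map the kernel to the claimed product by (\<Sum>a_l)/(x - 1) modulo (x^t - 1)/(x - 1), the lcm parts
  of the gcd/lcm splittings of (a_i, a_j + a_k) in Z_m_i \<times> Z_gcd(m_j,m_k) and of (a_j, a_k),
  and the remaining a_l. The gcd parts a_i + a_j + a_k and a_j + a_k of the two splittings are
  recovered from the first coordinate and from the first splitting, so the map is injective;
  both groups have order (\<Prod>m_l)/(x - 1).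
\<close>

section \<open>Numbers of the form \<open>x\<^sup>n - 1\<close>\<close>

lemma power_minus_one_dvd:
  fixes x :: "'a::comm_ring_1"
  assumes "m dvd n"
  shows "x ^ m - 1 dvd x ^ n - 1"
proof -
  obtain r where "n = m * r" using assms by blast
  then have "x ^ n - 1 = (x ^ m - 1) * (\<Sum>l<r. (x ^ m) ^ l)"
    by (simp add: power_mult power_diff_1_eq)
  then show ?thesis by simp
qed

lemma gcd_power_minus_one:
  fixes x :: int
  shows "gcd (x ^ m - 1) (x ^ n - 1) = \<bar>x ^ gcd m n - 1\<bar>"
proof (induction m n rule: gcd_nat_induct)
  case (step m n)
  obtain w where "x ^ (n * (m div n)) - 1 = (x ^ n - 1) * w"
    using power_minus_one_dvd[of n "n * (m div n)" x] by (auto elim: dvdE)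
  then have w: "x ^ (n * (m div n)) = (x ^ n - 1) * w + 1" by (simp add: algebra_simps)
  have "x ^ m = x ^ (m mod n) * x ^ (n * (m div n))"
    by (metis mod_mult_div_eq mult.commute power_add)
  then have split: "x ^ m - 1 = (x ^ (m mod n) * w) * (x ^ n - 1) + (x ^ (m mod n) - 1)"
    by (simp add: w algebra_simps)
  have "gcd (x ^ m - 1) (x ^ n - 1) = gcd (x ^ n - 1) (x ^ (m mod n) - 1)"
    unfolding split by (metis gcd.commute gcd_add_mult)
  also have "\<dots> = \<bar>x ^ gcd n (m mod n) - 1\<bar>" by (rule step.IH)
  finally show ?case by (metis gcd.commute gcd_red_nat)
qed simp

lemma power_minus_one_neq_zero:
  fixes x :: int
  assumes "\<bar>x\<bar> \<ge> 2" "n > 0"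
  shows "x ^ n - 1 \<noteq> 0"
proof
  assume "x ^ n - 1 = 0"
  then have "\<bar>x\<bar> ^ n = 1" by (metis abs_one eq_iff_diff_eq_0 power_abs)
  moreover have "\<bar>x\<bar> ^ 1 \<le> \<bar>x\<bar> ^ n" using assms by (intro power_increasing) auto
  ultimately show False using assms(1) by simp
qed

lemma gcd3_eq_common_divisor:
  fixes a b c t :: nat
  assumes "t dvd a" "t dvd b" "t dvd c" "gcd (gcd (a div t) (b div t)) (c div t) = 1"
  shows "gcd a (gcd b c) = t"
proof -
  have "gcd a (gcd b c) = gcd (t * (a div t)) (gcd (t * (b div t)) (t * (c div t)))"
    using assms(1-3) by simp
  also have "\<dots> = t * gcd (gcd (a div t) (b div t)) (c div t)"
    by (simp add: gcd_mult_distrib_nat gcd.assoc)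
  finally show ?thesis using assms(4) by simp
qed

section \<open>Splitting \<open>\<int>\<^sub>a \<times> \<int>\<^sub>b\<close> into gcd and lcm parts\<close>

text \<open>With w = crt_idem a b, the map (y, z) \<mapsto> (y + z mod gcd a b, w y + (w - 1) z mod lcm a b)
  is an isomorphism Z_a \<times> Z_b \<cong> Z_gcd a b \<times> Z_lcm a b.\<close>

definition crt_idem :: "int \<Rightarrow> int \<Rightarrow> int" where
  "crt_idem a b = (SOME w. b div gcd a b dvd w \<and> a div gcd a b dvd w - 1)"

lemma crt_idem:
  fixes a b :: int
  assumes "a \<noteq> 0"
  shows "b div gcd a b dvd crt_idem a b" "a div gcd a b dvd crt_idem a b - 1"
proof -
  have "coprime (b div gcd a b) (a div gcd a b)"
    using assms by (simp add: div_gcd_coprime coprime_commute)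
  then obtain u v where "u * (b div gcd a b) + v * (a div gcd a b) = 1"
    by (metis bezout_int coprime_iff_gcd_eq_1)
  then have "\<exists>w. b div gcd a b dvd w \<and> a div gcd a b dvd w - 1"
    by (intro exI[of _ "u * (b div gcd a b)"]) (metis add_diff_cancel_left' dvd_minus_iff dvd_triv_left dvd_triv_right minus_diff_eq)
  from someI_ex[OF this] show "b div gcd a b dvd crt_idem a b" "a div gcd a b dvd crt_idem a b - 1"
    unfolding crt_idem_def by blast+
qed

lemma lcm_eq_mult_div_gcd:
  fixes a b :: int
  assumes "a > 0" "b > 0"
  shows "lcm a b = a * (b div gcd a b)" "lcm a b = a div gcd a b * b"
  using assms by (simp_all add: lcm_altdef_int div_mult_swap dvd_div_mult)

lemma lcm_dvd_crt_idem_mult: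
  fixes a b :: int
  assumes "a > 0" "b > 0"
  shows "lcm a b dvd crt_idem a b * a" "lcm a b dvd (crt_idem a b - 1) * b"
proof -
  have "a * (b div gcd a b) dvd a * crt_idem a b"
    using crt_idem(1)[of a b] assms(1) by (intro mult_dvd_mono) simp_all
  then show "lcm a b dvd crt_idem a b * a"
    using assms by (simp add: lcm_eq_mult_div_gcd(1) mult.commute)
  have "a div gcd a b * b dvd (crt_idem a b - 1) * b"
    using crt_idem(2)[of a b] assms(1) by (intro mult_dvd_mono) simp_all
  then show "lcm a b dvd (crt_idem a b - 1) * b"
    using assms by (simp add: lcm_eq_mult_div_gcd(2))
qed

lemma dvd_of_crt_coordinates:
  fixes a b y z :: int
  assumes "a > 0" "b > 0" "gcd a b dvd y + z"
    and "lcm a b dvd crt_idem a b * y + (crt_idem a b - 1) * z"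
  shows "a dvd y" "b dvd z"
proof -
  define w where "w = crt_idem a b"
  define v where "v = w * y + (w - 1) * z"
  have v: "lcm a b dvd v" using assms(4) by (simp add: v_def w_def)
  have "a = gcd a b * (a div gcd a b)" by simp
  moreover have "a div gcd a b dvd 1 - w" using crt_idem(2)[of a b] assms(1) by (simp add: w_def dvd_diff_commute)
  ultimately have "a dvd (y + z) * (1 - w)" using assms(3) by (metis mult_dvd_mono)
  moreover have "a dvd v" using v dvd_lcm1 dvd_trans by blast
  moreover have "y = v + (y + z) * (1 - w)" by (simp add: v_def algebra_simps)
  ultimately show "a dvd y" by (metis dvd_add)
  have "b = gcd a b * (b div gcd a b)" by simp
  moreover have "b div gcd a b dvd w" using crt_idem(1)[of a b] assms(1) by (simp add: w_def)
  ultimately have "b dvd (y + z) * w" using assms(3) by (metis mult_dvd_mono)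
  moreover have "b dvd v" using v dvd_lcm2 dvd_trans by blast
  moreover have "z = (y + z) * w - v" by (simp add: v_def algebra_simps)
  ultimately show "b dvd z" by (metis dvd_diff)
qed

section \<open>Products of cyclic groups\<close>

lemma linear_form_mod_add:
  fixes lam m a b :: "'i \<Rightarrow> int" and c :: int
  assumes "\<And>l. l \<in> I \<Longrightarrow> c dvd lam l * m l"
  shows "(\<Sum>l\<in>I. lam l * ((a l + b l) mod m l)) mod c
       = ((\<Sum>l\<in>I. lam l * a l) + (\<Sum>l\<in>I. lam l * b l)) mod c"
proof -
  have "lam l * ((a l + b l) mod m l) mod c = lam l * (a l + b l) mod c" if l: "l \<in> I" for l
  proof -
    obtain d where d: "lam l * m l = c * d" using assms[OF l] by blast
    have "lam l * ((a l + b l) mod m l) = lam l * (a l + b l) + c * (- d * ((a l + b l) div m l))"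
      by (simp add: minus_div_mult_eq_mod[symmetric] algebra_simps flip: d)
    then show ?thesis by (simp only: mod_mult_self2)
  qed
  then have "(\<Sum>l\<in>I. lam l * ((a l + b l) mod m l) mod c) = (\<Sum>l\<in>I. lam l * (a l + b l) mod c)"
    by (intro sum.cong) simp_all
  then have "(\<Sum>l\<in>I. lam l * ((a l + b l) mod m l)) mod c = (\<Sum>l\<in>I. lam l * (a l + b l)) mod c"
    using mod_sum_eq[of "\<lambda>l. lam l * ((a l + b l) mod m l)" c I]
      mod_sum_eq[of "\<lambda>l. lam l * (a l + b l)" c I] by simp
  then show ?thesis by (simp add: sum.distrib distrib_left)
qed

lemma div_mod_eq_if_mod_mult_eq:
  fixes x y e c :: int
  assumes "e dvd x" "e dvd y" "x mod (e * c) = y mod (e * c)"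
  shows "x div e mod c = y div e mod c"
proof (cases "e = 0")
  case False
  obtain x' y' where xy: "x = e * x'" "y = e * y'" using assms(1,2) by blast
  then have "e * (x' mod c) = e * (y' mod c)" using assms(3) by (simp only: mod_mult_mult1)
  then show ?thesis using xy False by simp
qed simp

lemma cyc_carrier: "m \<noteq> 0 \<Longrightarrow> carrier (cyc m) = {0..<\<bar>m\<bar>}"
  by (simp add: cyc_def carrier_integer_mod_group)

lemma cyc_prod_carrier:
  "(\<And>l. l < length ms \<Longrightarrow> ms ! l \<noteq> 0)
   \<Longrightarrow> carrier (cyc_prod ms) = (\<Pi>\<^sub>E l\<in>{..<length ms}. {0..<\<bar>ms ! l\<bar>})"
  unfolding cyc_prod_def carrier_product_group by (intro PiE_cong) (simp add: cyc_carrier)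

lemma cyc_prod_mult:
  "monoid.mult (cyc_prod ms) = (\<lambda>a b. \<lambda>l\<in>{..<length ms}. (a l + b l) mod \<bar>ms ! l\<bar>)"
  by (simp add: cyc_prod_def cyc_def)

lemma cyc_prod_one: "one (cyc_prod ms) = (\<lambda>l\<in>{..<length ms}. 0)"
  by (simp add: cyc_prod_def cyc_def)

lemma cyc_prod_group: "group (cyc_prod ms)"
  unfolding cyc_prod_def by (rule product_group) (simp add: cyc_def)

lemma cyc_prod_card:
  assumes "\<And>l. l < length ms \<Longrightarrow> ms ! l \<noteq> 0"
  shows "int (card (carrier (cyc_prod ms))) = (\<Prod>l<length ms. \<bar>ms ! l\<bar>)"
  using assms by (simp add: cyc_prod_carrier card_PiE of_nat_prod)

lemma product_group_cong:
  assumes "\<And>i. i \<in> I \<Longrightarrow> G i = G' i"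
  shows "product_group I G = product_group I G'"
proof -
  have "(\<Pi>\<^sub>E i\<in>I. carrier (G i)) = (\<Pi>\<^sub>E i\<in>I. carrier (G' i))"
    by (rule PiE_cong) (simp add: assms)
  moreover have "(\<lambda>x y. \<lambda>i\<in>I. x i \<otimes>\<^bsub>G i\<^esub> y i) = (\<lambda>x y. \<lambda>i\<in>I. x i \<otimes>\<^bsub>G' i\<^esub> y i)"
    "(\<lambda>i\<in>I. \<one>\<^bsub>G i\<^esub>) = (\<lambda>i\<in>I. \<one>\<^bsub>G' i\<^esub>)"
    by (intro ext; simp add: restrict_def assms)+
  ultimately show ?thesis unfolding product_group_def by simp
qed

lemma cyc_prod_eqI:
  assumes "map abs ms = map abs ms'"
  shows "cyc_prod ms = cyc_prod ms'"
proof -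
  have len: "length ms = length ms'" using map_eq_imp_length_eq[OF assms] .
  have "cyc (ms ! l) = cyc (ms' ! l)" if "l < length ms" for l
    using nth_map[OF that, of abs] nth_map[of l ms' abs] that len assms by (simp add: cyc_def)
  then show ?thesis unfolding cyc_prod_def len[symmetric] by (intro product_group_cong) simp
qed

lemma hom_cyc_prodI:
  assumes nonzero: "\<And>r. r < length ms \<Longrightarrow> ms ! r \<noteq> 0"
    and additive: "\<And>r a b. r < length ms \<Longrightarrow> a \<in> carrier S \<Longrightarrow> b \<in> carrier S
        \<Longrightarrow> f r (a \<otimes>\<^bsub>S\<^esub> b) mod \<bar>ms ! r\<bar> = (f r a + f r b) mod \<bar>ms ! r\<bar>"
  shows "(\<lambda>a. \<lambda>r\<in>{..<length ms}. f r a mod \<bar>ms ! r\<bar>) \<in> hom S (cyc_prod ms)"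
proof (rule homI)
  fix a assume "a \<in> carrier S"
  then show "(\<lambda>r\<in>{..<length ms}. f r a mod \<bar>ms ! r\<bar>) \<in> carrier (cyc_prod ms)"
    using nonzero by (simp add: cyc_prod_carrier)
next
  fix a b assume "a \<in> carrier S" "b \<in> carrier S"
  then show "(\<lambda>r\<in>{..<length ms}. f r (a \<otimes>\<^bsub>S\<^esub> b) mod \<bar>ms ! r\<bar>)
      = (\<lambda>r\<in>{..<length ms}. f r a mod \<bar>ms ! r\<bar>) \<otimes>\<^bsub>cyc_prod ms\<^esub> (\<lambda>r\<in>{..<length ms}. f r b mod \<bar>ms ! r\<bar>)"
    using additive by (auto simp: cyc_prod_mult mod_add_eq)
qed

lemma (in group_hom) card_kernel_mult_card:
  assumes "h ` carrier G = carrier H"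
  shows "card (kernel G H h) * card (carrier H) = order G"
proof -
  have "G Mod kernel G H h \<cong> H" by (rule FactGroup_iso[OF assms])
  then have "card (rcosets kernel G H h) = card (carrier H)"
    by (metis iso_same_card FactGroup_def partial_object.select_convs(1))
  then show ?thesis using G.lagrange[OF subgroup_kernel] by (simp add: mult.commute)
qed

lemma iso_if_inj_card_eq:
  assumes "h \<in> hom G H" "inj_on h (carrier G)"
    and "finite (carrier H)" "card (carrier G) = card (carrier H)"
  shows "G \<cong> H"
proof -
  have "h ` carrier G = carrier H"
    using assms by (intro card_subset_eq) (auto simp: hom_def card_image)
  then show ?thesis using assms(1,2) by (auto simp: is_iso_def iso_def bij_betw_def)
qed

lemma sum_mod_hom:
  assumes "D > 0" "\<And>l. l < length ms \<Longrightarrow> D dvd ms ! l"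
  shows "(\<lambda>a. (\<Sum>l<length ms. a l) mod D) \<in> hom (cyc_prod ms) (integer_mod_group (nat D))"
proof (rule homI)
  fix a b assume "a \<in> carrier (cyc_prod ms)" "b \<in> carrier (cyc_prod ms)"
  have "(\<Sum>l<length ms. 1 * ((a l + b l) mod \<bar>ms ! l\<bar>)) mod D
      = ((\<Sum>l<length ms. 1 * a l) + (\<Sum>l<length ms. 1 * b l)) mod D"
    using assms(2) by (intro linear_form_mod_add) simp
  then show "(\<Sum>l<length ms. (a \<otimes>\<^bsub>cyc_prod ms\<^esub> b) l) mod D
      = ((\<Sum>l<length ms. a l) mod D) \<otimes>\<^bsub>integer_mod_group (nat D)\<^esub> ((\<Sum>l<length ms. b l) mod D)"
    using assms(1) by (simp add: cyc_prod_mult mod_add_eq)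
qed (use assms(1) in \<open>simp add: carrier_integer_mod_group\<close>)

lemma card_sum_mod_kernel:
  assumes "ms \<noteq> []" "\<And>l. l < length ms \<Longrightarrow> ms ! l \<noteq> 0"
    and "D > 0" "\<And>l. l < length ms \<Longrightarrow> D dvd ms ! l"
  shows "int (card (kernel (cyc_prod ms) (integer_mod_group (nat D)) (\<lambda>a. (\<Sum>l<length ms. a l) mod D))) * D
       = (\<Prod>l<length ms. \<bar>ms ! l\<bar>)"
proof -
  let ?h = "\<lambda>a. (\<Sum>l<length ms. a l) mod D"
  interpret group_hom "cyc_prod ms" "integer_mod_group (nat D)" ?h
    using sum_mod_hom[OF assms(3,4)] cyc_prod_group by (simp add: group_hom_def group_hom_axioms_def)
  have "?h ` carrier (cyc_prod ms) = {0..<D}"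
  proof
    show "?h ` carrier (cyc_prod ms) \<subseteq> {0..<D}" using assms(3) by auto
    show "{0..<D} \<subseteq> ?h ` carrier (cyc_prod ms)"
    proof
      fix r assume r: "r \<in> {0..<D}"
      let ?a = "\<lambda>l\<in>{..<length ms}. if l = 0 then r else 0"
      have "D \<le> \<bar>ms ! 0\<bar>" using dvd_imp_le_int[of "ms ! 0" D] assms by auto
      then have "?a \<in> carrier (cyc_prod ms)" using r assms(2) by (auto simp: cyc_prod_carrier)
      moreover have "?h ?a = r" using r assms(1) by simp
      ultimately show "r \<in> ?h ` carrier (cyc_prod ms)" by force
    qed
  qed
  then have "card (kernel (cyc_prod ms) (integer_mod_group (nat D)) ?h) * nat D = card (carrier (cyc_prod ms))"
    using card_kernel_mult_card assms(3) by (simp add: carrier_integer_mod_group order_def)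
  then show ?thesis using cyc_prod_card[OF assms(2)] assms(3)
    by (metis int_nat_eq less_imp_le of_nat_mult)
qed

section \<open>The kernel of the sum map\<close>

locale sum_mod_kernel =
  fixes ms :: "int list" and D :: int and i j k :: nat
  assumes nonzero: "\<And>l. l < length ms \<Longrightarrow> ms ! l \<noteq> 0"
    and D_pos: "D > 0"
    and indices: "i < length ms" "j < length ms" "k < length ms"
    and distinct: "i \<noteq> j" "i \<noteq> k" "j \<noteq> k"
    and D_dvd_gcd: "D dvd gcd (ms ! i) (gcd (ms ! j) (ms ! k))"
    and gcd_dvd: "\<And>l. l < length ms \<Longrightarrow> gcd (ms ! i) (gcd (ms ! j) (ms ! k)) dvd ms ! l"
begin

definition M :: "nat \<Rightarrow> int" where "M l = \<bar>ms ! l\<bar>"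
definition g_jk :: int where "g_jk = gcd (ms ! j) (ms ! k)"
definition g_ijk :: int where "g_ijk = gcd (ms ! i) g_jk"
definition others :: "nat list" where "others = filter (\<lambda>l. l \<notin> {i, j, k}) [0..<length ms]"

definition T :: "int list" where
  "T = [g_ijk div D, lcm (ms ! i) g_jk, lcm (ms ! j) (ms ! k)] @ map (\<lambda>l. ms ! l) others"

definition K :: "(nat \<Rightarrow> int) set" where
  "K = kernel (cyc_prod ms) (integer_mod_group (nat D)) (\<lambda>a. (\<Sum>l<length ms. a l) mod D)"

abbreviation S :: "(nat \<Rightarrow> int) monoid" where "S \<equiv> (cyc_prod ms)\<lparr>carrier := K\<rparr>"

definition coord :: "nat \<Rightarrow> (nat \<Rightarrow> int) \<Rightarrow> int" where
  "coord r a =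
    (if r = 0 then (\<Sum>l<length ms. a l) div D
     else if r = 1 then crt_idem (M i) g_jk * a i + (crt_idem (M i) g_jk - 1) * (a j + a k)
     else if r = 2 then crt_idem (M j) (M k) * a j + (crt_idem (M j) (M k) - 1) * a k
     else a (others ! (r - 3)))"

definition F :: "(nat \<Rightarrow> int) \<Rightarrow> nat \<Rightarrow> int" where
  "F a = (\<lambda>r\<in>{..<length T}. coord r a mod \<bar>T ! r\<bar>)"

lemma M_pos: "l < length ms \<Longrightarrow> M l > 0"
  using nonzero by (simp add: M_def)

lemma g_jk_pos: "g_jk > 0"
  using nonzero indices by (simp add: g_jk_def)

lemma g_ijk_pos: "g_ijk > 0"
  using nonzero indices by (simp add: g_ijk_def)

lemma D_mult_g_ijk_div_D: "D * (g_ijk div D) = g_ijk"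
  using D_dvd_gcd by (simp add: g_ijk_def g_jk_def)

lemma g_ijk_dvd: "l < length ms \<Longrightarrow> g_ijk dvd ms ! l"
  using gcd_dvd by (simp add: g_ijk_def g_jk_def)

lemma D_dvd: "l < length ms \<Longrightarrow> D dvd ms ! l"
  using D_dvd_gcd gcd_dvd dvd_trans by blast

lemma set_others: "set others = {..<length ms} - {i, j, k}"
  by (auto simp: others_def)

lemma length_T: "length T = length others + 3"
  by (simp add: T_def)

lemma abs_T:
  "\<bar>T ! 0\<bar> = g_ijk div D" "\<bar>T ! 1\<bar> = lcm (M i) g_jk" "\<bar>T ! 2\<bar> = lcm (M j) (M k)"
  "r < length others \<Longrightarrow> \<bar>T ! (r + 3)\<bar> = M (others ! r)"
  using g_ijk_pos D_pos by (simp_all add: T_def M_def numeral_eq_Suc pos_imp_zdiv_nonneg_iff)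

lemma T_index_cases:
  assumes "r < length T"
  obtains "r = 0" | "r = 1" | "r = 2" | r' where "r = r' + 3" "r' < length others"
proof (cases "r < 3")
  case True
  then consider "r = 0" | "r = 1" | "r = 2" by linarith
  then show thesis using that(1-3) by cases
next
  case False
  then show thesis using that(4)[of "r - 3"] assms length_T by simp
qed

lemma others_less: "r < length others \<Longrightarrow> others ! r < length ms"
  using nth_mem set_others by blast

lemma T_nonzero: "r < length T \<Longrightarrow> T ! r \<noteq> 0"
proof -
  assume "r < length T"
  then have "\<bar>T ! r\<bar> > 0"
  proof (cases rule: T_index_cases)
    case 1
    have "D \<le> g_ijk" using D_dvd_gcd g_ijk_pos by (simp add: g_ijk_def g_jk_def zdvd_imp_le)
    then show ?thesis using D_pos by (simp add: 1 abs_T pos_imp_zdiv_pos_iff)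
  next
    case 2
    then show ?thesis using abs_T(2) M_pos[OF indices(1)] g_jk_pos by (simp add: lcm_pos_int)
  next
    case 3
    then show ?thesis using abs_T(3) M_pos[OF indices(2)] M_pos[OF indices(3)] by (simp add: lcm_pos_int)
  next
    case 4
    then show ?thesis using abs_T(4) M_pos others_less by simp
  qed
  then show ?thesis by auto
qed

lemma mem_K: "a \<in> K \<longleftrightarrow> a \<in> carrier (cyc_prod ms) \<and> D dvd (\<Sum>l<length ms. a l)"
  by (simp add: K_def kernel_def mod_eq_0_iff_dvd)

lemma subgroup_K: "subgroup K (cyc_prod ms)"
  unfolding K_def using sum_mod_hom[OF D_pos D_dvd] cyc_prod_group
  by (intro group_hom.subgroup_kernel) (simp add: group_hom_def group_hom_axioms_def)

lemma group_S: "group S"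
  using group.subgroup_imp_group[OF cyc_prod_group subgroup_K] .

lemma linear_form_additive:
  assumes "I \<subseteq> {..<length ms}" "\<And>l. l \<in> I \<Longrightarrow> c dvd lam l * M l"
  shows "(\<Sum>l\<in>I. lam l * (a \<otimes>\<^bsub>cyc_prod ms\<^esub> b) l) mod c
       = ((\<Sum>l\<in>I. lam l * a l) + (\<Sum>l\<in>I. lam l * b l)) mod c"
proof -
  have "(\<Sum>l\<in>I. lam l * (a \<otimes>\<^bsub>cyc_prod ms\<^esub> b) l) = (\<Sum>l\<in>I. lam l * ((a l + b l) mod M l))"
    using assms(1) by (intro sum.cong) (auto simp: cyc_prod_mult M_def)
  then show ?thesis using linear_form_mod_add[OF assms(2)] by simp
qed

lemma coord_additive:
  assumes "r < length T" "a \<in> K" "b \<in> K"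
  shows "coord r (a \<otimes>\<^bsub>cyc_prod ms\<^esub> b) mod \<bar>T ! r\<bar> = (coord r a + coord r b) mod \<bar>T ! r\<bar>"
  using assms(1)
proof (cases rule: T_index_cases)
  case 1
  have "a \<otimes>\<^bsub>cyc_prod ms\<^esub> b \<in> K" using subgroup.m_closed[OF subgroup_K assms(2,3)] .
  then have "D dvd (\<Sum>l<length ms. (a \<otimes>\<^bsub>cyc_prod ms\<^esub> b) l)" "D dvd (\<Sum>l<length ms. a l)"
    "D dvd (\<Sum>l<length ms. b l)" using assms(2,3) by (simp_all add: mem_K)
  moreover have "(\<Sum>l<length ms. 1 * (a \<otimes>\<^bsub>cyc_prod ms\<^esub> b) l) mod g_ijk
      = ((\<Sum>l<length ms. 1 * a l) + (\<Sum>l<length ms. 1 * b l)) mod g_ijk"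
    using g_ijk_dvd by (intro linear_form_additive) (auto simp: M_def)
  then have "(\<Sum>l<length ms. (a \<otimes>\<^bsub>cyc_prod ms\<^esub> b) l) mod (D * (g_ijk div D))
      = ((\<Sum>l<length ms. a l) + (\<Sum>l<length ms. b l)) mod (D * (g_ijk div D))"
    by (simp add: D_mult_g_ijk_div_D)
  ultimately have "(\<Sum>l<length ms. (a \<otimes>\<^bsub>cyc_prod ms\<^esub> b) l) div D mod (g_ijk div D)
      = ((\<Sum>l<length ms. a l) + (\<Sum>l<length ms. b l)) div D mod (g_ijk div D)"
    by (intro div_mod_eq_if_mod_mult_eq) simp_all
  with \<open>D dvd (\<Sum>l<length ms. a l)\<close> show ?thesis by (simp add: 1 abs_T coord_def div_plus_div_distrib_dvd_left)
next
  case 2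
  define lam where "lam l = (if l = i then crt_idem (M i) g_jk else crt_idem (M i) g_jk - 1)" for l
  have form: "coord 1 x = (\<Sum>l\<in>{i, j, k}. lam l * x l)" for x
    using distinct by (simp add: coord_def lam_def algebra_simps)
  have "lcm (M i) g_jk dvd lam l * M l" if "l \<in> {i, j, k}" for l
  proof (cases "l = i")
    case True
    then show ?thesis using lcm_dvd_crt_idem_mult(1) M_pos[OF indices(1)] g_jk_pos by (simp add: lam_def)
  next
    case False
    then have "g_jk dvd M l" using that by (auto simp: g_jk_def M_def)
    then have "(crt_idem (M i) g_jk - 1) * g_jk dvd lam l * M l" using False by (simp add: lam_def)
    then show ?thesis using lcm_dvd_crt_idem_mult(2) M_pos[OF indices(1)] g_jk_pos dvd_trans by blast
  qed
  then have "(\<Sum>l\<in>{i, j, k}. lam l * (a \<otimes>\<^bsub>cyc_prod ms\<^esub> b) l) mod lcm (M i) g_jk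
      = ((\<Sum>l\<in>{i, j, k}. lam l * a l) + (\<Sum>l\<in>{i, j, k}. lam l * b l)) mod lcm (M i) g_jk"
    using indices by (intro linear_form_additive) auto
  then show ?thesis by (simp only: 2 abs_T form)
next
  case 3
  define lam where "lam l = (if l = j then crt_idem (M j) (M k) else crt_idem (M j) (M k) - 1)" for l
  have form: "coord 2 x = (\<Sum>l\<in>{j, k}. lam l * x l)" for x
    using distinct by (simp add: coord_def lam_def)
  have "lcm (M j) (M k) dvd lam l * M l" if "l \<in> {j, k}" for l
    using lcm_dvd_crt_idem_mult M_pos[OF indices(2)] M_pos[OF indices(3)] that by (auto simp: lam_def)
  then have "(\<Sum>l\<in>{j, k}. lam l * (a \<otimes>\<^bsub>cyc_prod ms\<^esub> b) l) mod lcm (M j) (M k)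
      = ((\<Sum>l\<in>{j, k}. lam l * a l) + (\<Sum>l\<in>{j, k}. lam l * b l)) mod lcm (M j) (M k)"
    using indices by (intro linear_form_additive) auto
  then show ?thesis by (simp only: 3 abs_T form)
next
  case 4
  then show ?thesis using others_less[OF 4(2)]
    by (simp add: abs_T coord_def cyc_prod_mult M_def mod_add_eq)
qed

lemma F_hom: "F \<in> hom S (cyc_prod T)"
  unfolding F_def using T_nonzero coord_additive by (intro hom_cyc_prodI) simp_all

lemma F_eq_one_imp:
  assumes a: "a \<in> K" and Fa: "F a = \<one>\<^bsub>cyc_prod T\<^esub>"
  shows "a = \<one>\<^bsub>cyc_prod ms\<^esub>"
proof -
  have carrier: "a \<in> carrier (cyc_prod ms)" and D_dvd_sum: "D dvd (\<Sum>l<length ms. a l)"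
    using a by (simp_all add: mem_K)
  have zero_if_dvd: "a l = 0" if "l < length ms" "M l dvd a l" for l
  proof -
    have "0 \<le> a l" "a l < M l"
      using carrier that(1) by (simp_all add: cyc_prod_carrier[OF nonzero] PiE_iff M_def)
    then show ?thesis using that(2) mod_pos_pos_trivial[of "a l" "M l"] by (simp add: dvd_eq_mod_eq_0)
  qed
  have coord_dvd: "\<bar>T ! r\<bar> dvd coord r a" if "r < length T" for r
    using fun_cong[OF Fa, of r] that by (simp add: F_def cyc_prod_one mod_eq_0_iff_dvd)
  have others_zero: "a l = 0" if l: "l \<in> set others" for l
  proof -
    obtain r where "r < length others" "l = others ! r" using l by (metis in_set_conv_nth)
    then show ?thesis using coord_dvd[of "r + 3"] zero_if_dvd others_less
      by (simp add: length_T abs_T coord_def)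
  qed
  have "(\<Sum>l<length ms. a l) = (\<Sum>l\<in>{i, j, k}. a l)"
    using others_zero indices by (intro sum.mono_neutral_right) (auto simp: set_others)
  then have sum_a: "(\<Sum>l<length ms. a l) = a i + (a j + a k)" using distinct by simp
  have "D * (g_ijk div D) dvd D * ((\<Sum>l<length ms. a l) div D)"
    using coord_dvd[of 0] by (intro mult_dvd_mono) (simp_all add: length_T abs_T coord_def)
  then have "g_ijk dvd (\<Sum>l<length ms. a l)"
    by (simp only: D_mult_g_ijk_div_D dvd_mult_div_cancel[OF D_dvd_sum])
  then have gcd_i: "gcd (M i) g_jk dvd a i + (a j + a k)" using sum_a by (simp add: g_ijk_def M_def)
  have lcm_i: "lcm (M i) g_jk dvd crt_idem (M i) g_jk * a i + (crt_idem (M i) g_jk - 1) * (a j + a k)"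
    using coord_dvd[of 1] unfolding abs_T(2) coord_def by (simp add: length_T del: lcm_least_iff)
  have Mi: "M i dvd a i" and g_jk_dvd_sum: "g_jk dvd a j + a k"
    using dvd_of_crt_coordinates[OF M_pos[OF indices(1)] g_jk_pos gcd_i lcm_i] by simp_all
  have gcd_jk: "gcd (M j) (M k) dvd a j + a k" using g_jk_dvd_sum by (simp add: g_jk_def M_def)
  have lcm_jk: "lcm (M j) (M k) dvd crt_idem (M j) (M k) * a j + (crt_idem (M j) (M k) - 1) * a k"
    using coord_dvd[of 2] unfolding abs_T(3) coord_def by (simp add: length_T del: lcm_least_iff)
  have "M j dvd a j" "M k dvd a k"
    using dvd_of_crt_coordinates[OF M_pos[OF indices(2)] M_pos[OF indices(3)] gcd_jk lcm_jk] by simp_all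
  then have "a l = 0" if "l < length ms" for l
    using that Mi zero_if_dvd others_zero indices by (cases "l \<in> {i, j, k}") (auto simp: set_others)
  then show ?thesis using carrier by (auto simp: cyc_prod_carrier[OF nonzero] cyc_prod_one PiE_iff extensional_def)
qed

lemma prod_M_split: "(\<Prod>l<length ms. M l) = (\<Prod>l\<in>set others. M l) * (M i * M j * M k)"
proof -
  have "(\<Prod>l<length ms. M l) = (\<Prod>l\<in>{..<length ms} - {i, j, k}. M l) * (\<Prod>l\<in>{i, j, k}. M l)"
    using indices by (intro prod.subset_diff) auto
  then show ?thesis using distinct by (simp add: set_others mult.assoc)
qed

lemma card_T: "int (card (carrier (cyc_prod T))) = g_ijk div D * lcm (M i) g_jk * lcm (M j) (M k) * (\<Prod>l\<in>set others. M l)"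
proof -
  have "int (card (carrier (cyc_prod T))) = prod_list (map abs T)"
    using cyc_prod_card T_nonzero by (simp add: prod.list_conv_set_nth atLeast0LessThan)
  also have "\<dots> = \<bar>g_ijk div D\<bar> * lcm (M i) g_jk * lcm (M j) (M k) * prod_list (map M others)"
    by (simp add: T_def M_def[abs_def] comp_def)
  also have "prod_list (map M others) = (\<Prod>l\<in>set others. M l)"
    by (rule prod.distinct_set_conv_list[symmetric]) (simp add: others_def)
  finally show ?thesis using g_ijk_pos D_pos by (simp add: pos_imp_zdiv_nonneg_iff)
qed

lemma M_ijk_eq: "M i * M j * M k = D * (g_ijk div D) * lcm (M i) g_jk * lcm (M j) (M k)"
proof -
  have "M i * g_jk = g_ijk * lcm (M i) g_jk"
    using prod_gcd_lcm_int[of "M i" g_jk] M_pos[OF indices(1)] g_jk_pos by (simp add: g_ijk_def M_def)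
  moreover have "M j * M k = g_jk * lcm (M j) (M k)"
    using prod_gcd_lcm_int[of "M j" "M k"] M_pos indices by (simp add: g_jk_def M_def)
  ultimately show ?thesis by (simp add: D_mult_g_ijk_div_D mult.assoc)
qed

lemma card_K: "card K = card (carrier (cyc_prod T))"
proof -
  have "int (card K) * D = (\<Prod>l<length ms. M l)"
    unfolding K_def M_def using indices nonzero D_pos D_dvd by (intro card_sum_mod_kernel) auto
  also have "\<dots> = int (card (carrier (cyc_prod T))) * D"
    unfolding prod_M_split M_ijk_eq card_T by (simp add: algebra_simps)
  finally show ?thesis using D_pos by simp
qed

theorem S_iso_cyc_prod_T: "S \<cong> cyc_prod T"
proof (rule iso_if_inj_card_eq)
  show "F \<in> hom S (cyc_prod T)" by (rule F_hom)
  show "inj_on F (carrier S)"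
    using F_eq_one_imp by (subst inj_on_one_iff'[OF F_hom group_S cyc_prod_group]) simp
  show "finite (carrier (cyc_prod T))"
    using T_nonzero by (simp add: cyc_prod_carrier finite_PiE)
  show "card (carrier S) = card (carrier (cyc_prod T))"
    using card_K by simp
qed

end

section \<open>Maximal tori of \<open>SL\<^sub>n(\<epsilon>q)\<close>\<close>

locale power_torus =
  fixes x :: int and ns :: "nat list" and i j k :: nat
  assumes base: "\<bar>x\<bar> \<ge> 2"
    and positive: "\<And>n. n \<in> set ns \<Longrightarrow> n > 0"
    and ns_indices: "i < length ns" "j < length ns" "k < length ns"
    and ns_distinct: "i \<noteq> j" "i \<noteq> k" "j \<noteq> k"
    and gcd_eq_Gcd: "gcd (ns ! i) (gcd (ns ! j) (ns ! k)) = Gcd (set ns)"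
begin

abbreviation ms :: "int list" where "ms \<equiv> map (\<lambda>n. x ^ n - 1) ns"

lemma gcd_ms: "gcd (ms ! i) (gcd (ms ! j) (ms ! k)) = \<bar>x ^ Gcd (set ns) - 1\<bar>"
  using ns_indices by (simp add: gcd_power_minus_one flip: gcd_eq_Gcd)

sublocale sum_mod_kernel ms "\<bar>x - 1\<bar>" i j k
proof
  show "ms ! l \<noteq> 0" if "l < length ms" for l
    using that base positive power_minus_one_neq_zero by simp
  show "\<bar>x - 1\<bar> dvd gcd (ms ! i) (gcd (ms ! j) (ms ! k))"
    using power_minus_one_dvd[of 1 "Gcd (set ns)" x] by (simp add: gcd_ms)
  show "gcd (ms ! i) (gcd (ms ! j) (ms ! k)) dvd ms ! l" if "l < length ms" for l
    using that power_minus_one_dvd[of "Gcd (set ns)" "ns ! l" x] unfolding gcd_ms by (simp add: Gcd_dvd)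
qed (use base ns_indices ns_distinct in simp_all)

theorem sum_mod_kernel_iso:
  "(cyc_prod ms)\<lparr>carrier := kernel (cyc_prod ms) (integer_mod_group (nat \<bar>x - 1\<bar>))
      (\<lambda>a. (\<Sum>l<length ns. a l) mod \<bar>x - 1\<bar>)\<rparr>
   \<cong> cyc_prod ([(x ^ Gcd (set ns) - 1) div (x - 1),
                 lcm (x ^ (ns ! i) - 1) (x ^ gcd (ns ! j) (ns ! k) - 1),
                 lcm (x ^ (ns ! j) - 1) (x ^ (ns ! k) - 1)]
                @ map (\<lambda>l. x ^ (ns ! l) - 1) (filter (\<lambda>l. l \<notin> {i, j, k}) [0..<length ns]))"
proof -
  have "\<bar>(x ^ Gcd (set ns) - 1) div (x - 1)\<bar> = \<bar>g_ijk div \<bar>x - 1\<bar>\<bar>"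
    using power_minus_one_dvd[of 1 "Gcd (set ns)" x] gcd_ms by (simp add: abs_div g_ijk_def g_jk_def)
  moreover have "map (\<lambda>l. x ^ (ns ! l) - 1) (filter (\<lambda>l. l \<notin> {i, j, k}) [0..<length ns])
      = map (\<lambda>l. ms ! l) others"
    by (simp add: others_def)
  ultimately have "cyc_prod ([(x ^ Gcd (set ns) - 1) div (x - 1),
                 lcm (x ^ (ns ! i) - 1) (x ^ gcd (ns ! j) (ns ! k) - 1),
                 lcm (x ^ (ns ! j) - 1) (x ^ (ns ! k) - 1)]
                @ map (\<lambda>l. x ^ (ns ! l) - 1) (filter (\<lambda>l. l \<notin> {i, j, k}) [0..<length ns]))
      = cyc_prod T"
    using indices by (intro cyc_prod_eqI) (simp add: T_def g_jk_def gcd_power_minus_one)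
  then show ?thesis using S_iso_cyc_prod_T by (simp add: K_def)
qed

end

theorem corollary2:
  fixes q n :: nat and eps :: int and ns :: "nat list" and i j k :: nat
  assumes "\<exists>p e. prime p \<and> e > 0 \<and> q = p ^ e"
    and "eps = 1 \<or> eps = -1"
    and "\<forall>x\<in>set ns. x > 0" and "sum_list ns = n"
    and "i < length ns" "j < length ns" "k < length ns"
    and "i \<noteq> j" "i \<noteq> k" "j \<noteq> k"
    and "gcd (gcd (ns ! i div Gcd (set ns)) (ns ! j div Gcd (set ns))) (ns ! k div Gcd (set ns)) = 1"
  shows "SL_torus eps q ns \<cong>
    cyc_prod ([((eps * int q) ^ Gcd (set ns) - 1) div (eps * int q - 1),
               lcm ((eps * int q) ^ (ns ! i) - 1) ((eps * int q) ^ gcd (ns ! j) (ns ! k) - 1),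
               lcm ((eps * int q) ^ (ns ! j) - 1) ((eps * int q) ^ (ns ! k) - 1)]
              @ map (\<lambda>l. (eps * int q) ^ (ns ! l) - 1)
                    (filter (\<lambda>l. l \<notin> {i, j, k}) [0..<length ns]))"
proof -
  obtain p e where "prime p" "e > 0" "q = p ^ e" using assms(1) by blast
  then have "q \<ge> 2" using prime_ge_2_nat[of p] power_increasing[of 1 e p] by simp
  then have "\<bar>eps * int q\<bar> \<ge> 2" using assms(2) by auto
  moreover have "gcd (ns ! i) (gcd (ns ! j) (ns ! k)) = Gcd (set ns)"
    using assms(5-7,11) by (intro gcd3_eq_common_divisor) (simp_all add: Gcd_dvd)
  ultimately interpret power_torus "eps * int q" ns i j k
    using assms(3,5-10) by unfold_locales auto
  show ?thesis
    using sum_mod_kernel_iso by (simp add: SL_torus_def GL_torus_def torus_det_def[abs_def] cyc_def)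
qed

end
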